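(* Let $[\alpha]_{A,C}\psi$ be a well-formed ac-box and let $\beta$ be a program such that $\alpha\parallel\beta$ is a program with recorder $h$, where $\beta$ does not interfere with $[\alpha\parallel\_\,]_{A,C}\psi$, i.e. for all $\chi\in\{A,C,\psi\}$: $FV(\chi)\cap BV(\beta)\subseteq\{\mu,\mu',h\}$ and $CN_{\{h\}}(\chi)\cap CN(\beta)\subseteq CN(\alpha)$. Let $(v,\tau\downarrow\alpha,w_\alpha)\in[\![\alpha]\!]$ and $(v,\tau\downarrow\beta,w_\beta)\in[\![\beta]\!]$ with $w=w_\alpha\bowtie w_\beta$, with $w=w_\alpha=w_\beta$ on $\{\mu,\mu'\}$ if $w\ne\bot$, and with $\tau\downarrow(\alpha\parallel\beta)=\tau$ (so $(v,\tau,w)\in[\![\alpha\parallel\beta]\!]$). Then for $\lambda\in\{A,C\}$: (1) $v\cdot(\tau\downarrow\alpha)\models\lambda$ iff $v\cdot\tau\models\lambda$; (2) if $w\ne\bot$, then $w_\alpha\cdot(\tau\downarrow\alpha)\models\psi$ iff $w\cdot\tau\models\psi$.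
   Context: Logic $\mathsf{dL}_{\mathsf{CHP}}$. Real variables (with differential variables $x'$), trace variables, channels $\mathbb N$; $\mu,\mu'$ are the global time variables. Terms: real terms $x\mid r\in\mathbb Q\mid e_1+e_2\mid e_1\cdot e_2\mid(p)'\mid\mathrm{ch}(te)\mid\mathrm{val}(te)\mid\mathrm{time}(te)\mid|te|$ and trace terms $h\mid\epsilon\mid\langle ch,p_1,p_2\rangle\mid te_1\cdot te_2\mid te\downarrow Y\mid te[e]$ ($p$ polynomials with rational coefficients, $Y$ finite or cofinite channel set). Programs: $x:=p\mid x:=*\mid ?\chi\mid x'=p\,\&\,\chi\mid\alpha;\beta\mid\alpha\cup\beta\mid\alpha^*\mid ch(h)!p\mid ch(h)?x\mid\alpha\parallel\beta$ with, in $\alpha\parallel\beta$, $BV(\alpha)\cap BV(\beta)\subseteq\{\mu,\mu'\}\cup\mathrm{TVar}$, and each program binding at most one trace variable, its recorder. Formulas: $e_1\sim e_2$, $\neg,\wedge,\forall$, $[\alpha]\psi$, $\langle\alpha\rangle\psi$, $[\alpha]_{A,C}\psi$, $\langle\alpha\rangle_{A,C}\psi$; the ac-box $[\alpha]_{A,C}\psi$ is well-formed if $FV(A,C)\cap(BV(\alpha)\cup\{\mu,\mu'\})$ contains only trace variables. Semantics. Traces are finite sequences of events $\langle ch,a,d\rangle\in\mathbb N\times\mathbb R\times\mathbb R$; $\tau\downarrow Y$ deletes events with channel outside $Y$; a recorded trace $(h,\tau)$; $v\cdot(h,\tau)$ is the state $v$ with $v(h)$ replaced by $v(h)\cdot\tau$.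 $\tau\downarrow\gamma$ is projection onto the channels occurring in program $\gamma$. A program denotes a set $[\![\alpha]\!]$ of runs $(v,\tau,w)$, $v$ a state, $\tau$ a trace recorded by the program's recorder, $w$ a final state or $\bot$ (unfinished); for parallel composition, $[\![\alpha\parallel\beta]\!]=\{(v,\tau,w_\alpha\bowtie w_\beta):(v,\tau\downarrow\alpha,w_\alpha)\in[\![\alpha]\!],(v,\tau\downarrow\beta,w_\beta)\in[\![\beta]\!],w_\alpha=w_\beta\text{ on }\{\mu,\mu'\},\tau\downarrow(\alpha\parallel\beta)=\tau\}$, where $w_\alpha\bowtie w_\beta$ is $\bot$ if $w_\alpha=\bot$ or $w_\beta=\bot$, and otherwise equals $w_\alpha$ on $BV(\alpha)$ and $w_\beta$ elsewhere. (Other program constructs have the standard communicating-hybrid-program semantics: assignments, tests, ODEs, choice, prefix-closed sequential composition, iteration, and send/receive that append an event $\langle ch,\text{value},v(\mu)\rangle$.) $v\models\phi$ denotes satisfaction. Static semantics (formulas viewed as truth-valued). $FV(e)$: variables $z$ such that two states differing only on $z$ give $e$ different values. For $X\subseteq\mathrm{TVar}$, $v\downarrow_XY$ replaces $v(h)$ by $v(h)\downarrow Y$ for $h\in X$; $CN_X(e)$: channels $ch$ such that some $v,\tilde v$ with $v\downarrow_X(\mathbb N\setminus\{ch\})=\tilde v\downarrow_X(\mathbb N\setminus\{ch\})$ give $e$ different values. $BV(\alpha)$: variables $z$ with $(w\cdot\tau)(z)\ne v(z)$ for some $(v,\tau,w)\in[\![\alpha]\!]$, $w\ne\bot$. $CN(\alpha)$: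 channels $ch$ with $\tau\downarrow\{ch\}\ne\epsilon$ for some run of $\alpha$. *)

theory Defs
  imports Complex_Main
begin

text \<open>Semantic (denotational) model of the ingredients of the statement.
  Channels are natural numbers; events are triples (channel, value, time stamp).\<close>

type_synonym event = "nat \<times> real \<times> real"
type_synonym trace = "event list"

text \<open>Real variables: ordinary variables, differential variables x', and the
  global time variable mu together with its differential mu'.\<close>
datatype rvar = Var nat | DVar nat | Mu | MuD

datatype var = R rvar | T nat

record state =
  rst :: "rvar \<Rightarrow> real"
  tst :: "nat \<Rightarrow> trace"

definition differs :: "state \<Rightarrow> state \<Rightarrow> var \<Rightarrow> bool" where
  "differs s u z = (case z of R x \<Rightarrow> rst s x \<noteq> rst u x | T g \<Rightarrow> tst s g \<noteq> tst u g)"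

definition proj :: "trace \<Rightarrow> nat set \<Rightarrow> trace" where
  "proj \<tau> Y = filter (\<lambda>e. fst e \<in> Y) \<tau>"

definition rec :: "state \<Rightarrow> nat \<Rightarrow> trace \<Rightarrow> state" where
  "rec v h \<tau> = v\<lparr>tst := (tst v)(h := tst v h @ \<tau>)\<rparr>"

definition proj_state :: "nat set \<Rightarrow> nat set \<Rightarrow> state \<Rightarrow> state" where
  "proj_state X Y v = v\<lparr>tst := (\<lambda>g. if g \<in> X then proj (tst v g) Y else tst v g)\<rparr>"

type_synonym fml = "state \<Rightarrow> bool"

definition FVf :: "fml \<Rightarrow> var set" where
  "FVf P = {z. \<exists>v u. (\<forall>z'. z' \<noteq> z \<longrightarrow> \<not> differs v u z') \<and> P v \<noteq> P u}"

definition CNf :: "nat set \<Rightarrow> fml \<Rightarrow> nat set" where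
  "CNf X P = {ch. \<exists>v u. proj_state X (- {ch}) v = proj_state X (- {ch}) u \<and> P v \<noteq> P u}"

text \<open>Runs (v, tau, w); w = None represents the unfinished outcome \<bottom>.\<close>
type_synonym run = "state \<times> trace \<times> state option"

text \<open>A program is represented by its denotation (set of runs) together with the set
  of channels occurring in it (used for the projection tau \<down> alpha).\<close>
record prog =
  runs :: "run set"
  chans :: "nat set"

definition BVp :: "nat \<Rightarrow> prog \<Rightarrow> var set" where
  "BVp h \<alpha> = {z. \<exists>v \<tau> w. (v, \<tau>, Some w) \<in> runs \<alpha> \<and> differs (rec w h \<tau>) v z}"

definition CNp :: "prog \<Rightarrow> nat set" where
  "CNp \<alpha> = {ch. \<exists>v \<tau> w. (v, \<tau>, w) \<in> runs \<alpha> \<and> proj \<tau> {ch} \<noteq> []}"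

text \<open>Properties enjoyed by the denotation of every dL_CHP program: final states leave
  trace variables untouched (the trace is recorded separately), only finitely many real
  variables are bound, and recorded traces only use channels occurring in the program.\<close>
definition wf_prog :: "nat \<Rightarrow> prog \<Rightarrow> bool" where
  "wf_prog h \<alpha> \<longleftrightarrow>
     (\<forall>v \<tau> w. (v, \<tau>, Some w) \<in> runs \<alpha> \<longrightarrow> tst w = tst v)
   \<and> finite {x. R x \<in> BVp h \<alpha>}
   \<and> (\<forall>v \<tau> w. (v, \<tau>, w) \<in> runs \<alpha> \<longrightarrow> fst ` set \<tau> \<subseteq> chans \<alpha>)"

definition join_state :: "var set \<Rightarrow> state \<Rightarrow> state \<Rightarrow> state" where
  "join_state B a b =
     \<lparr>rst = (\<lambda>x. if R x \<in> B then rst a x else rst b x),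
      tst = (\<lambda>g. if T g \<in> B then tst a g else tst b g)\<rparr>"

fun join :: "var set \<Rightarrow> state option \<Rightarrow> state option \<Rightarrow> state option" where
  "join B (Some a) (Some b) = Some (join_state B a b)"
| "join B _ _ = None"

end

(* A and C are evaluated in the initial state, so for them only the recorded trace changes:
   tau and its restriction to alpha differ by events on channels outside alpha, and by
   non-interference these are channels of beta on which the formulas (read through the
   recorder h) do not depend.  For psi, the joined final state moreover differs from alpha's
   final state only on the finitely many real variables bound by beta other than mu, mu',
   none of which is free in psi. *)
theory Submission
  imports Defs
begin

lemma rst_rec [simp]: "rst (rec s h \<sigma>) = rst s"
  by (simp add: rec_def)

lemma tst_rec [simp]: "tst (rec s h \<sigma>) = (tst s)(h := tst s h @ \<sigma>)"
  by (simp add: rec_def)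

lemma rst_proj_state [simp]: "rst (proj_state X Y s) = rst s"
  by (simp add: proj_state_def)

lemma tst_proj_state [simp]:
  "tst (proj_state X Y s) = (\<lambda>g. if g \<in> X then proj (tst s g) Y else tst s g)"
  by (simp add: proj_state_def)

lemma rst_join_state [simp]:
  "rst (join_state B a b) = (\<lambda>x. if R x \<in> B then rst a x else rst b x)"
  by (simp add: join_state_def)

lemma tst_join_state [simp]:
  "tst (join_state B a b) = (\<lambda>g. if T g \<in> B then tst a g else tst b g)"
  by (simp add: join_state_def)

lemma CNf_rec_filter_eq:
  assumes "finite S" and "S \<inter> CNf {h} P = {}"
  shows "P (rec s h (filter (\<lambda>e. fst e \<notin> S) \<sigma>)) = P (rec s h \<sigma>)"
  using assms
proof (induction S rule: finite_induct)
  case empty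
  then show ?case by simp
next
  case (insert c S)
  define \<sigma>' where "\<sigma>' = filter (\<lambda>e. fst e \<notin> S) \<sigma>"
  have filter_insert: "filter (\<lambda>e. fst e \<notin> insert c S) \<sigma> = filter (\<lambda>e. fst e \<noteq> c) \<sigma>'"
    unfolding \<sigma>'_def by (auto intro: filter_cong)
  have "proj_state {h} (- {c}) (rec s h (filter (\<lambda>e. fst e \<noteq> c) \<sigma>'))
      = proj_state {h} (- {c}) (rec s h \<sigma>')"
    by (rule state.equality) (auto simp: proj_def)
  moreover have "c \<notin> CNf {h} P"
    using insert.prems by blast
  ultimately have "P (rec s h (filter (\<lambda>e. fst e \<noteq> c) \<sigma>')) = P (rec s h \<sigma>')"
    unfolding CNf_def by blast
  with insert show ?case
    unfolding filter_insert \<sigma>'_def by blast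
qed

lemma CNf_rec_proj_eq:
  assumes "(fst ` set \<sigma> - Y) \<inter> CNf {h} P = {}"
  shows "P (rec s h (proj \<sigma> Y)) = P (rec s h \<sigma>)"
proof -
  have "proj \<sigma> Y = filter (\<lambda>e. fst e \<notin> fst ` set \<sigma> - Y) \<sigma>"
    unfolding proj_def by (auto intro: filter_cong)
  then show ?thesis
    using CNf_rec_filter_eq[OF _ assms] by simp
qed

lemma FVf_coincidence_rvars:
  assumes "finite X" and "\<forall>x\<in>X. R x \<notin> FVf P"
    and "\<forall>x. x \<notin> X \<longrightarrow> rst s x = rst u x" and "tst s = tst u"
  shows "P s = P u"
  using assms
proof (induction X arbitrary: u rule: finite_induct)
  case empty
  then have "s = u"
    by (intro state.equality ext) auto
  then show ?case by simp
next
  case (insert x X)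
  define u' where "u' = u\<lparr>rst := (rst u)(x := rst s x)\<rparr>"
  have "P s = P u'"
    using insert.IH insert.prems unfolding u'_def by auto
  moreover have "\<forall>z. z \<noteq> R x \<longrightarrow> \<not> differs u' u z"
    unfolding u'_def differs_def by (auto split: var.splits)
  moreover have "R x \<notin> FVf P"
    using insert.prems by blast
  ultimately show ?case
    unfolding FVf_def by blast
qed

lemma CNp_subset_chans:
  assumes "wf_prog h \<alpha>"
  shows "CNp \<alpha> \<subseteq> chans \<alpha>"
proof
  fix c assume "c \<in> CNp \<alpha>"
  then obtain v \<tau> w where run: "(v, \<tau>, w) \<in> runs \<alpha>" and "proj \<tau> {c} \<noteq> []"
    unfolding CNp_def by blast
  then have "c \<in> fst ` set \<tau>"
    unfolding proj_def by (fastforce simp: filter_empty_conv)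
  with run assms show "c \<in> chans \<alpha>"
    unfolding wf_prog_def by blast
qed

lemma run_channels_subset_CNp:
  assumes "(v, \<tau>, w) \<in> runs \<alpha>"
  shows "fst ` set \<tau> \<subseteq> CNp \<alpha>"
proof
  fix c assume "c \<in> fst ` set \<tau>"
  then have "proj \<tau> {c} \<noteq> []"
    unfolding proj_def by (auto simp: filter_empty_conv)
  with assms show "c \<in> CNp \<alpha>"
    unfolding CNp_def by blast
qed

lemma tst_final_eq_initial:
  assumes "wf_prog h \<alpha>" and "(v, \<tau>, Some w) \<in> runs \<alpha>"
  shows "tst w = tst v"
  using assms unfolding wf_prog_def by blast

lemma rst_final_eq_initial_if_notin_BVp:
  assumes "(v, \<tau>, Some w) \<in> runs \<alpha>" and "R x \<notin> BVp h \<alpha>"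
  shows "rst w x = rst v x"
  using assms unfolding BVp_def differs_def by fastforce

lemma par_channels_outside_left:
  assumes "wf_prog h \<alpha>"
    and "(v, proj \<tau> (chans \<beta>), w\<^sub>\<beta>) \<in> runs \<beta>"
    and "proj \<tau> (chans \<alpha> \<union> chans \<beta>) = \<tau>"
  shows "fst ` set \<tau> - chans \<alpha> \<subseteq> CNp \<beta> - CNp \<alpha>"
proof -
  have "fst ` set \<tau> - chans \<alpha> \<subseteq> fst ` set (proj \<tau> (chans \<beta>))"
  proof
    fix c assume c: "c \<in> fst ` set \<tau> - chans \<alpha>"
    then obtain e where e: "e \<in> set \<tau>" "fst e = c"
      by blast
    then have "e \<in> set (proj \<tau> (chans \<alpha> \<union> chans \<beta>))"
      using assms(3) by simp
    with c e show "c \<in> fst ` set (proj \<tau> (chans \<beta>))"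
      unfolding proj_def by force
  qed
  also have "\<dots> \<subseteq> CNp \<beta>"
    using assms(2) by (rule run_channels_subset_CNp)
  finally show ?thesis
    using CNp_subset_chans[OF assms(1)] by blast
qed

lemma join_state_rec_eq_left:
  assumes wf_\<alpha>: "wf_prog h \<alpha>" and wf_\<beta>: "wf_prog h \<beta>"
    and run\<^sub>\<alpha>: "(v, \<tau>\<^sub>\<alpha>, Some a) \<in> runs \<alpha>" and run\<^sub>\<beta>: "(v, \<tau>\<^sub>\<beta>, Some b) \<in> runs \<beta>"
    and mu: "rst a Mu = rst b Mu" "rst a MuD = rst b MuD"
    and FV: "FVf P \<inter> BVp h \<beta> \<subseteq> {R Mu, R MuD, T h}"
  shows "P (rec (join_state (BVp h \<alpha>) a b) h \<sigma>) = P (rec a h \<sigma>)"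
proof -
  define X where "X = {x. R x \<in> BVp h \<beta>} - {Mu, MuD}"
  have "finite X"
    using wf_\<beta> unfolding X_def wf_prog_def by auto
  moreover have "\<forall>x\<in>X. R x \<notin> FVf P"
    using FV unfolding X_def by auto
  moreover have "\<forall>x. x \<notin> X \<longrightarrow> rst (rec a h \<sigma>) x = rst (rec (join_state (BVp h \<alpha>) a b) h \<sigma>) x"
    using rst_final_eq_initial_if_notin_BVp[OF run\<^sub>\<alpha>] rst_final_eq_initial_if_notin_BVp[OF run\<^sub>\<beta>] mu
    unfolding X_def by auto
  moreover have "tst (rec a h \<sigma>) = tst (rec (join_state (BVp h \<alpha>) a b) h \<sigma>)"
    using tst_final_eq_initial[OF wf_\<alpha> run\<^sub>\<alpha>] tst_final_eq_initial[OF wf_\<beta> run\<^sub>\<beta>] by auto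
  ultimately show ?thesis
    by (metis FVf_coincidence_rvars)
qed

theorem lemmaA1:
  fixes \<alpha> \<beta> :: prog and A C \<psi> :: fml and h :: nat and v :: state and \<tau> :: trace
    and w\<^sub>\<alpha> w\<^sub>\<beta> w :: "state option"
  assumes wf_\<alpha>: "wf_prog h \<alpha>" and wf_\<beta>: "wf_prog h \<beta>"
    and par: "BVp h \<alpha> \<inter> BVp h \<beta> \<subseteq> {R Mu, R MuD} \<union> range T"
    and ac_wf: "(FVf A \<union> FVf C) \<inter> (BVp h \<alpha> \<union> {R Mu, R MuD}) \<subseteq> range T"
    and nonint: "\<forall>\<chi>\<in>{A, C, \<psi>}. FVf \<chi> \<inter> BVp h \<beta> \<subseteq> {R Mu, R MuD, T h}
                             \<and> CNf {h} \<chi> \<inter> CNp \<beta> \<subseteq> CNp \<alpha>"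
    and run\<^sub>\<alpha>: "(v, proj \<tau> (chans \<alpha>), w\<^sub>\<alpha>) \<in> runs \<alpha>"
    and run\<^sub>\<beta>: "(v, proj \<tau> (chans \<beta>), w\<^sub>\<beta>) \<in> runs \<beta>"
    and w_def: "w = join (BVp h \<alpha>) w\<^sub>\<alpha> w\<^sub>\<beta>"
    and mu: "\<forall>a b. w\<^sub>\<alpha> = Some a \<longrightarrow> w\<^sub>\<beta> = Some b \<longrightarrow>
               rst a Mu = rst b Mu \<and> rst a MuD = rst b MuD"
    and tr: "proj \<tau> (chans \<alpha> \<union> chans \<beta>) = \<tau>"
  shows "(\<forall>L\<in>{A, C}. L (rec v h (proj \<tau> (chans \<alpha>))) = L (rec v h \<tau>))
       \<and> (\<forall>a w'. w = Some w' \<longrightarrow> w\<^sub>\<alpha> = Some a \<longrightarrow>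
              (\<psi> (rec a h (proj \<tau> (chans \<alpha>))) = \<psi> (rec w' h \<tau>)))"
proof -
  have trace_irrelevant: "P (rec s h (proj \<tau> (chans \<alpha>))) = P (rec s h \<tau>)"
    if "P \<in> {A, C, \<psi>}" for P s
  proof (rule CNf_rec_proj_eq)
    show "(fst ` set \<tau> - chans \<alpha>) \<inter> CNf {h} P = {}"
      using par_channels_outside_left[OF wf_\<alpha> run\<^sub>\<beta> tr] nonint that by blast
  qed
  have "\<psi> (rec a h (proj \<tau> (chans \<alpha>))) = \<psi> (rec w' h \<tau>)"
    if w': "w = Some w'" and a: "w\<^sub>\<alpha> = Some a" for a w'
  proof -
    obtain b where b: "w\<^sub>\<beta> = Some b"
      using w' w_def by (cases w\<^sub>\<beta>) auto
    have "\<psi> (rec a h (proj \<tau> (chans \<alpha>))) = \<psi> (rec w' h (proj \<tau> (chans \<alpha>)))"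
      using join_state_rec_eq_left[OF wf_\<alpha> wf_\<beta>, of v _ a _ b \<psi>] run\<^sub>\<alpha> run\<^sub>\<beta> mu nonint
        w' w_def a b by simp
    also have "\<dots> = \<psi> (rec w' h \<tau>)"
      using trace_irrelevant by blast
    finally show ?thesis .
  qed
  with trace_irrelevant show ?thesis
    by blast
qed

end
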